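(* Consider Cobb--Douglas exchange economies with $n$ agents and $m$ commodities such that every agent owns a strictly positive amount of every commodity ($e_{ij}>0$ for all $i\in[n]$, $j\in[m]$) and strong competitiveness holds both for the truthful and for the misreported profile (for every commodity $j$ there is an agent $k$ with $\alpha_{kj}>0$, and for every $j$ there is an agent $k$ with $\alpha'_{kj}>0$, where $\alpha'$ denotes the reported exponents when agent $i$ misreports). Then the incentive ratio is at most $m$: for every such economy, agent $i$ and misreport $u_i'$, $$\frac{u_i(x_i')}{u_i(x_i)}\le m,$$ where $x$ and $x'$ are the competitive equilibrium allocations under truthful reporting and under the misreport, respectively.
   Context: An exchange economy with $n$ agents and $m$ commodities is a tuple $((u_i)_{i=1}^n,(e_i)_{i=1}^n)$, with $u_i:\mathbb{R}_+^m\to\mathbb{R}$ and endowments $e_i\in\mathbb{R}_+^m$; without loss of generality $e_i\in[0,1]^m$ and $\sum_i e_{ij}=1$ for each $j$. Cobb--Douglas utilities are $u_k(x)=\prod_{j=1}^m x_j^{\alpha_{kj}}$ with $0\le\alpha_{kj}\le1$, $\sum_j\alpha_{kj}=1$. Given prices $p$, agent $k$'s demand is the set of maximizers of $u_k(x_k)$ subject to $p\cdot x_k\le p\cdot e_k$, $x_k\ge0$. A competitive equilibrium is a pair $(p,x)$ with markets clearing and each $x_k$ in agent $k$'s demand at $p$; under the stated assumptions the equilibrium price is unique (up to scaling) and positive. In the misreported scenario agent $i$ reports a Cobb--Douglas utility $u_i'$ with exponents $\alpha_i'$ while all others report truthfully, yielding equilibrium allocation $x'$, and $x_i'$ is evaluated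 with the true $u_i$. The incentive ratio is the supremum of $u_i(x_i')/u_i(x_i)$ over all such economies, agents and misreports. *)

theory Defs
  imports Complex_Main
begin

text \<open>Agents are indexed by k < n, commodities by j < m.
  Exponents: alpha :: nat => nat => real, alpha k j = exponent of agent k on good j.
  Endowments e k j, allocations x k j, prices p j.\<close>

definition cobb_douglas :: "nat \<Rightarrow> (nat \<Rightarrow> real) \<Rightarrow> (nat \<Rightarrow> real) \<Rightarrow> real" where
  "cobb_douglas m a y = (\<Prod>j<m. if a j = 0 then 1 else y j powr a j)"
  \<comment> \<open>x^a with the convention x^0 = 1 (powr has 0 powr 0 = 0)\<close>

definition valid_exponents :: "nat \<Rightarrow> (nat \<Rightarrow> real) \<Rightarrow> bool" where
  "valid_exponents m a \<longleftrightarrow> (\<forall>j<m. 0 \<le> a j \<and> a j \<le> 1) \<and> (\<Sum>j<m. a j) = 1"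

definition valid_endowments :: "nat \<Rightarrow> nat \<Rightarrow> (nat \<Rightarrow> nat \<Rightarrow> real) \<Rightarrow> bool" where
  "valid_endowments n m e \<longleftrightarrow>
     (\<forall>k<n. \<forall>j<m. 0 \<le> e k j \<and> e k j \<le> 1) \<and> (\<forall>j<m. (\<Sum>k<n. e k j) = 1)"

definition strongly_competitive :: "nat \<Rightarrow> nat \<Rightarrow> (nat \<Rightarrow> nat \<Rightarrow> real) \<Rightarrow> bool" where
  "strongly_competitive n m a \<longleftrightarrow> (\<forall>j<m. \<exists>k<n. a k j > 0)"

definition price_dot :: "nat \<Rightarrow> (nat \<Rightarrow> real) \<Rightarrow> (nat \<Rightarrow> real) \<Rightarrow> real" where
  "price_dot m p y = (\<Sum>j<m. p j * y j)"

definition in_demand :: "nat \<Rightarrow> (nat \<Rightarrow> real) \<Rightarrow> (nat \<Rightarrow> real) \<Rightarrow> (nat \<Rightarrow> real) \<Rightarrow> (nat \<Rightarrow> real) \<Rightarrow> bool" where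
  "in_demand m a w p y \<longleftrightarrow>
     (\<forall>j<m. 0 \<le> y j) \<and> price_dot m p y \<le> price_dot m p w \<and>
     (\<forall>z. (\<forall>j<m. 0 \<le> z j) \<and> price_dot m p z \<le> price_dot m p w
          \<longrightarrow> cobb_douglas m a z \<le> cobb_douglas m a y)"

definition competitive_equilibrium ::
  "nat \<Rightarrow> nat \<Rightarrow> (nat \<Rightarrow> nat \<Rightarrow> real) \<Rightarrow> (nat \<Rightarrow> nat \<Rightarrow> real) \<Rightarrow> (nat \<Rightarrow> real) \<Rightarrow> (nat \<Rightarrow> nat \<Rightarrow> real) \<Rightarrow> bool" where
  "competitive_equilibrium n m alpha e p x \<longleftrightarrow>
     (\<forall>j<m. 0 \<le> p j) \<and> (\<exists>j<m. p j \<noteq> 0) \<and>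
     (\<forall>j<m. (\<Sum>k<n. x k j) = (\<Sum>k<n. e k j)) \<and>
     (\<forall>k<n. in_demand m (alpha k) (e k) p (x k))"

end

theory Submission
  imports Defs
begin

text \<open>At a Cobb-Douglas equilibrium every agent \<open>k\<close> spends the share \<open>alpha k t\<close> of her income
  \<open>w k = p \<cdot> e k\<close> on good \<open>t\<close>, so clearing gives the linear price equations
  \<open>p t = \<Sum>k. alpha k t * w k\<close>. Only agent \<open>i\<close>'s exponents differ between the truthful and the
  misreported economy, and the other agents' part of the system is strictly substochastic because
  \<open>e i\<close> is positive; a maximum principle then yields \<open>alpha' i t * w' i * p t \<le> w i * p' t\<close>.
  So at the truthful prices agent \<open>i\<close>'s misreport bundle costs at most \<open>w i\<close> per good, one
  \<open>m\<close>-th of it is affordable, and homogeneity of the utility gives the factor \<open>m\<close>.\<close>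

lemma cobb_douglas_eq_exp_sum:
  assumes "\<forall>j<m. a j \<noteq> 0 \<longrightarrow> y j > 0"
  shows "cobb_douglas m a y = exp (\<Sum>j<m. if a j = 0 then 0 else a j * ln (y j))"
proof -
  have "cobb_douglas m a y = (\<Prod>j<m. exp (if a j = 0 then 0 else a j * ln (y j)))"
    unfolding cobb_douglas_def
    by (rule prod.cong) (use assms in \<open>auto simp: powr_def mult.commute\<close>)
  then show ?thesis
    by (simp add: exp_sum)
qed

lemma cobb_douglas_nonneg: "\<forall>j<m. 0 \<le> y j \<Longrightarrow> 0 \<le> cobb_douglas m a y"
  unfolding cobb_douglas_def by (auto intro!: prod_nonneg)

lemma cobb_douglas_pos: "\<forall>j<m. 0 < y j \<Longrightarrow> 0 < cobb_douglas m a y"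
  unfolding cobb_douglas_def by (auto intro!: prod_pos)

lemma cobb_douglas_eq_0: "j < m \<Longrightarrow> a j \<noteq> 0 \<Longrightarrow> y j = 0 \<Longrightarrow> cobb_douglas m a y = 0"
  unfolding cobb_douglas_def by (auto simp: prod_zero_iff)

lemma cobb_douglas_scale:
  assumes "c > 0" "(\<Sum>j<m. a j) = 1"
  shows "cobb_douglas m a (\<lambda>j. c * y j) = c * cobb_douglas m a y"
proof -
  have "cobb_douglas m a (\<lambda>j. c * y j) = (\<Prod>j<m. c powr a j * (if a j = 0 then 1 else y j powr a j))"
    unfolding cobb_douglas_def by (rule prod.cong) (use assms in \<open>auto simp: powr_mult\<close>)
  also have "\<dots> = (\<Prod>j<m. c powr a j) * cobb_douglas m a y"
    by (simp add: prod.distrib cobb_douglas_def)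
  also have "(\<Prod>j<m. c powr a j) = c powr (\<Sum>j<m. a j)"
    using assms(1) powr_sum[of c a "{..<m}"] by simp
  finally show ?thesis
    using assms by simp
qed

lemma in_demand_cobb_douglas_pos:
  assumes "in_demand m a w p y" "\<forall>j<m. 0 < w j"
  shows "0 < cobb_douglas m a y"
proof -
  have "cobb_douglas m a w \<le> cobb_douglas m a y"
    using assms unfolding in_demand_def by (auto simp: less_imp_le)
  moreover have "0 < cobb_douglas m a w"
    using assms(2) by (rule cobb_douglas_pos)
  ultimately show ?thesis by linarith
qed

lemma in_demand_pos:
  assumes "in_demand m a w p y" "\<forall>j<m. 0 < w j" "j < m" "a j \<noteq> 0"
  shows "0 < y j"
proof -
  have "0 \<le> y j"
    using assms unfolding in_demand_def by auto
  moreover have "y j \<noteq> 0"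
    using cobb_douglas_eq_0[of j m a y] assms in_demand_cobb_douglas_pos[OF assms(1,2)] by auto
  ultimately show ?thesis by simp
qed

text \<open>Raising a good the agent values for free strictly raises her utility, so demand only
  exists if all such goods have positive price.\<close>

lemma equilibrium_price_pos:
  assumes ce: "competitive_equilibrium n m alpha e p x"
    and sc: "strongly_competitive n m alpha"
    and epos: "\<forall>k<n. \<forall>j<m. e k j > 0" and t: "t < m"
  shows "p t > 0"
proof (rule ccontr)
  assume "\<not> p t > 0"
  then have pt: "p t = 0"
    using ce t by (force simp: competitive_equilibrium_def)
  obtain k where k: "k < n" "alpha k t > 0"
    using sc t unfolding strongly_competitive_def by auto
  have dem: "in_demand m (alpha k) (e k) p (x k)"
    using ce k by (auto simp: competitive_equilibrium_def)
  have ypos: "\<forall>j<m. alpha k j \<noteq> 0 \<longrightarrow> x k j > 0"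
    using in_demand_pos[OF dem] epos k by blast
  define z where "z = (x k)(t := x k t + 1)"
  have z0: "\<forall>j<m. 0 \<le> z j"
    using dem unfolding in_demand_def z_def by auto
  have "price_dot m p z = price_dot m p (x k)"
    unfolding price_dot_def by (rule sum.cong) (auto simp: z_def pt)
  then have "cobb_douglas m (alpha k) z \<le> cobb_douglas m (alpha k) (x k)"
    using dem z0 unfolding in_demand_def by auto
  moreover have "(\<Sum>j<m. if alpha k j = 0 then 0 else alpha k j * ln (x k j))
      < (\<Sum>j<m. if alpha k j = 0 then 0 else alpha k j * ln (z j))"
  proof (rule sum_strict_mono_ex1)
    show "\<forall>j\<in>{..<m}. (if alpha k j = 0 then 0 else alpha k j * ln (x k j))
        \<le> (if alpha k j = 0 then 0 else alpha k j * ln (z j))"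
      using ypos k by (auto simp: z_def intro!: mult_left_mono)
    show "\<exists>j\<in>{..<m}. (if alpha k j = 0 then 0 else alpha k j * ln (x k j))
        < (if alpha k j = 0 then 0 else alpha k j * ln (z j))"
      using ypos k t by (auto simp: z_def intro!: bexI[of _ t])
  qed simp
  moreover have "\<forall>j<m. alpha k j \<noteq> 0 \<longrightarrow> z j > 0"
    using ypos by (auto simp: z_def)
  ultimately show False
    using ypos by (simp add: cobb_douglas_eq_exp_sum)
qed

text \<open>Gibbs' inequality \<open>ln u \<le> u - 1\<close>, applied to the ratios \<open>y j / (a j * W / p j)\<close>:
  among bundles of cost at most \<open>W\<close>, the one spending the share \<open>a j\<close> of \<open>W\<close> on each good \<open>j\<close> is
  the unique maximiser on the support of \<open>a\<close>.\<close>

lemma cobb_douglas_less_share_bundle: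
  assumes va: "valid_exponents m a" and ppos: "\<forall>j<m. 0 < p j" and W: "W > 0"
    and y0: "\<forall>j<m. 0 \<le> y j" and ypos: "\<forall>j<m. a j \<noteq> 0 \<longrightarrow> 0 < y j"
    and budget: "price_dot m p y \<le> W"
    and s: "s < m" "a s \<noteq> 0" "y s \<noteq> a s * W / p s"
  shows "cobb_douglas m a y < cobb_douglas m a (\<lambda>j. a j * W / p j)"
proof -
  define ys where "ys = (\<lambda>j. a j * W / p j)"
  have a0: "\<forall>j<m. 0 \<le> a j" and asum: "(\<Sum>j<m. a j) = 1"
    using va unfolding valid_exponents_def by auto
  have yspos: "\<forall>j<m. a j \<noteq> 0 \<longrightarrow> 0 < ys j"
    using a0 ppos W by (auto simp: ys_def less_le)
  have gibbs: "a j * (ln (y j) - ln (ys j)) \<le> a j * ((y j - ys j) / ys j)"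
    if "j < m" "a j \<noteq> 0" for j
    using that ypos yspos a0 by (intro mult_left_mono ln_diff_le) auto
  have "(\<Sum>j<m. if a j = 0 then 0 else a j * ln (y j)) - (\<Sum>j<m. if a j = 0 then 0 else a j * ln (ys j))
      = (\<Sum>j<m. if a j = 0 then 0 else a j * (ln (y j) - ln (ys j)))"
    by (simp add: sum_subtractf[symmetric] right_diff_distrib if_distrib cong: if_cong)
  also have "\<dots> < (\<Sum>j<m. if a j = 0 then 0 else a j * ((y j - ys j) / ys j))"
  proof (rule sum_strict_mono_ex1)
    have "a s * (ln (y s) - ln (ys s)) < a s * ((y s - ys s) / ys s)"
      using ypos yspos a0 s by (intro mult_strict_left_mono ln_diff_less) (auto simp: less_le ys_def)
    then show "\<exists>j\<in>{..<m}. (if a j = 0 then 0 else a j * (ln (y j) - ln (ys j)))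
        < (if a j = 0 then 0 else a j * ((y j - ys j) / ys j))"
      using s by (intro bexI[of _ s]) auto
  qed (use gibbs in auto)
  also have "\<dots> = (\<Sum>j<m. if a j = 0 then 0 else p j * y j / W - a j)"
    by (rule sum.cong) (use ppos W in \<open>auto simp: ys_def field_simps\<close>)
  also have "\<dots> \<le> (\<Sum>j<m. p j * y j / W - a j)"
    by (rule sum_mono) (use ppos W y0 in auto)
  also have "\<dots> = price_dot m p y / W - 1"
    by (simp add: sum_subtractf asum price_dot_def sum_divide_distrib)
  also have "\<dots> \<le> 0"
    using budget W by simp
  finally have "cobb_douglas m a y < cobb_douglas m a ys"
    using ypos yspos by (simp add: cobb_douglas_eq_exp_sum)
  then show ?thesis
    unfolding ys_def .
qed

lemma in_demand_expenditure_share: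
  assumes dem: "in_demand m a w p y" and va: "valid_exponents m a"
    and ppos: "\<forall>j<m. 0 < p j" and wpos: "\<forall>j<m. 0 < w j" and t: "t < m"
  shows "p t * y t = a t * price_dot m p w"
proof -
  define W where "W = price_dot m p w"
  have W: "W > 0"
    unfolding W_def price_dot_def using t ppos wpos by (intro sum_pos) auto
  have y0: "\<forall>j<m. 0 \<le> y j" and budget: "price_dot m p y \<le> W"
    using dem unfolding in_demand_def W_def by auto
  have asum: "(\<Sum>j<m. a j) = 1"
    using va unfolding valid_exponents_def by auto
  have ypos: "\<forall>j<m. a j \<noteq> 0 \<longrightarrow> 0 < y j"
    using in_demand_pos[OF dem wpos] by blast
  have share: "p j * y j = a j * W" if "j < m" "a j \<noteq> 0" for j
  proof (rule ccontr)
    assume "p j * y j \<noteq> a j * W"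
    then have "y j \<noteq> a j * W / p j"
      using ppos that by (auto simp: field_simps)
    then have "cobb_douglas m a y < cobb_douglas m a (\<lambda>j. a j * W / p j)"
      using cobb_douglas_less_share_bundle[OF va ppos W y0 ypos budget] that by blast
    moreover have "price_dot m p (\<lambda>j. a j * W / p j) = (\<Sum>j<m. a j) * W"
      unfolding price_dot_def sum_distrib_right using ppos by (intro sum.cong) auto
    moreover have "\<forall>j<m. 0 \<le> a j * W / p j"
      using va ppos W unfolding valid_exponents_def by auto
    ultimately have "cobb_douglas m a (\<lambda>j. a j * W / p j) \<le> cobb_douglas m a y"
      using dem asum unfolding in_demand_def W_def by simp
    with \<open>cobb_douglas m a y < _\<close> show False
      by simp
  qed
  show ?thesis
  proof (cases "a t = 0")
    case True
    have "price_dot m p y = (\<Sum>j<m. if a j = 0 then p j * y j else 0) + (\<Sum>j<m. if a j = 0 then 0 else p j * y j)"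
      unfolding price_dot_def sum.distrib[symmetric] by (rule sum.cong) auto
    moreover have "(\<Sum>j<m. if a j = 0 then 0 else p j * y j) = (\<Sum>j<m. a j * W)"
      by (rule sum.cong) (use share in auto)
    ultimately have "(\<Sum>j<m. if a j = 0 then p j * y j else 0) \<le> 0"
      using budget asum by (simp add: sum_distrib_right[symmetric])
    moreover have "p t * y t \<le> (\<Sum>j<m. if a j = 0 then p j * y j else 0)"
      using member_le_sum[of t "{..<m}" "\<lambda>j. if a j = 0 then p j * y j else 0"] True t ppos y0
      by (simp add: less_imp_le)
    moreover have "0 \<le> p t * y t"
      using ppos y0 t by (auto intro: less_imp_le)
    ultimately have "p t * y t = 0"
      by linarith
    then show ?thesis
      using True by simp
  qed (use share t W_def in auto)
qed

lemma equilibrium_price_eq: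
  assumes ce: "competitive_equilibrium n m alpha e p x" and ve: "valid_endowments n m e"
    and share: "\<forall>k<n. \<forall>t<m. p t * x k t = alpha k t * price_dot m p (e k)" and t: "t < m"
  shows "p t = (\<Sum>k<n. alpha k t * price_dot m p (e k))"
proof -
  have "(\<Sum>k<n. x k t) = 1"
    using ce ve t unfolding competitive_equilibrium_def valid_endowments_def by auto
  then have "p t = (\<Sum>k<n. p t * x k t)"
    by (simp add: sum_distrib_left[symmetric])
  also have "\<dots> = (\<Sum>k<n. alpha k t * price_dot m p (e k))"
    using share t by (auto intro!: sum.cong)
  finally show ?thesis .
qed

text \<open>A maximum principle: sum the equation over the set \<open>D\<close> where \<open>z\<close> is positive; dropping
  the nonpositive terms outside \<open>D\<close> and using the column sums of \<open>N\<close> gives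
  \<open>\<Sum>D z < \<Sum>D z\<close> unless \<open>D\<close> is empty.\<close>

lemma substochastic_fixpoint_nonpos:
  fixes N :: "nat \<Rightarrow> nat \<Rightarrow> real" and z f :: "nat \<Rightarrow> real"
  assumes j: "j < m"
    and zeq: "\<forall>t<m. z t = (\<Sum>l<m. N t l * z l) + f t"
    and N0: "\<forall>t<m. \<forall>l<m. 0 \<le> N t l"
    and col: "\<forall>l<m. (\<Sum>t<m. N t l) < 1"
    and f: "\<forall>D \<subseteq> {..<m}. j \<in> D \<longrightarrow> sum f D \<le> 0"
  shows "z j \<le> 0"
proof (rule ccontr)
  assume "\<not> z j \<le> 0"
  define D where "D = {t. t < m \<and> z t > 0}"
  have jD: "j \<in> D"
    using j \<open>\<not> z j \<le> 0\<close> by (auto simp: D_def)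
  have D: "D \<subseteq> {..<m}"
    by (auto simp: D_def)
  then have finD: "finite D"
    using finite_subset by blast
  have "sum z D = (\<Sum>t\<in>D. \<Sum>l<m. N t l * z l) + sum f D"
    unfolding sum.distrib[symmetric] using zeq D by (intro sum.cong) auto
  also have "\<dots> \<le> (\<Sum>t\<in>D. \<Sum>l<m. N t l * z l)"
    using f D jD by simp
  also have "\<dots> \<le> (\<Sum>t\<in>D. \<Sum>l\<in>D. N t l * z l)"
  proof (rule sum_mono)
    fix t assume t: "t \<in> D"
    have "(\<Sum>l\<in>{..<m}-D. N t l * z l) \<le> 0"
      using N0 t D by (intro sum_nonpos) (auto simp: D_def mult_nonneg_nonpos)
    then show "(\<Sum>l<m. N t l * z l) \<le> (\<Sum>l\<in>D. N t l * z l)"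
      using sum.subset_diff[OF D, of "\<lambda>l. N t l * z l"] by simp
  qed
  also have "\<dots> = (\<Sum>l\<in>D. (\<Sum>t\<in>D. N t l) * z l)"
    by (subst sum.swap) (simp add: sum_distrib_right)
  also have "\<dots> < sum z D"
  proof (rule sum_strict_mono)
    fix l assume l: "l \<in> D"
    have "(\<Sum>t\<in>D. N t l) \<le> (\<Sum>t<m. N t l)"
      using D N0 l by (intro sum_mono2) auto
    also have "\<dots> < 1"
      using col l D by auto
    finally show "(\<Sum>t\<in>D. N t l) * z l < z l"
      using l by (simp add: D_def)
  qed (use finD jD in auto)
  finally show False by simp
qed

lemma price_eq_split_agent:
  fixes n :: nat
  assumes i: "i < n" and t: "t < m"
    and peq: "p t = (\<Sum>k<n. alpha k t * price_dot m p (e k))"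
  shows "p t = (\<Sum>l<m. (\<Sum>k\<in>{..<n}-{i}. alpha k t * e k l) * p l) + alpha i t * price_dot m p (e i)"
proof -
  have "(\<Sum>l<m. (\<Sum>k\<in>{..<n}-{i}. alpha k t * e k l) * p l)
      = (\<Sum>k\<in>{..<n}-{i}. \<Sum>l<m. alpha k t * e k l * p l)"
    by (simp add: sum_distrib_right sum.swap[of _ "{..<m}"])
  also have "\<dots> = (\<Sum>k\<in>{..<n}-{i}. alpha k t * price_dot m p (e k))"
    by (simp add: price_dot_def sum_distrib_left mult_ac)
  moreover have "(\<Sum>k<n. alpha k t * price_dot m p (e k))
      = (\<Sum>k\<in>{..<n}-{i}. alpha k t * price_dot m p (e k)) + alpha i t * price_dot m p (e i)"
    using sum.remove[of "{..<n}" i "\<lambda>k. alpha k t * price_dot m p (e k)"] i by (simp add: add.commute)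
  ultimately show ?thesis
    using peq by simp
qed

lemma valid_exponents_mult_sum_le:
  assumes a: "valid_exponents m a" and b: "valid_exponents m b"
    and D: "D \<subseteq> {..<m}" and j: "j \<in> D"
  shows "b j * sum a D \<le> sum b D"
proof -
  have "sum a D \<le> (\<Sum>t<m. a t)"
    using D a unfolding valid_exponents_def by (intro sum_mono2) auto
  then have "b j * sum a D \<le> b j"
    using a b D j unfolding valid_exponents_def by (auto simp: mult_left_le)
  also have "\<dots> \<le> sum b D"
    using D j b finite_subset unfolding valid_exponents_def by (intro member_le_sum) auto
  finally show ?thesis .
qed

lemma others_endowment_column_sum:
  fixes n :: nat
  assumes i: "i < n" and ve: "valid_endowments n m e"
    and va: "\<forall>k<n. valid_exponents m (alpha k)" and l: "l < m"
  shows "(\<Sum>t<m. \<Sum>k\<in>{..<n}-{i}. alpha k t * e k l) = 1 - e i l"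
proof -
  have "(\<Sum>t<m. \<Sum>k\<in>{..<n}-{i}. alpha k t * e k l) = (\<Sum>k\<in>{..<n}-{i}. e k l * (\<Sum>t<m. alpha k t))"
    by (subst sum.swap) (simp add: sum_distrib_left mult.commute)
  also have "\<dots> = (\<Sum>k\<in>{..<n}-{i}. e k l)"
    using va unfolding valid_exponents_def by (intro sum.cong) auto
  also have "\<dots> = 1 - e i l"
    using ve l i sum.remove[of "{..<n}" i "\<lambda>k. e k l"] unfolding valid_endowments_def by simp
  finally show ?thesis .
qed

text \<open>With \<open>w = p \<cdot> e i\<close>, \<open>w' = p' \<cdot> e i\<close> and \<open>c = alpha' i j\<close>, the vector
  \<open>z = c w' p - w p'\<close> solves \<open>z = N z + f\<close>, where \<open>N t l = \<Sum>k\<noteq>i. alpha k t * e k l\<close> is shared by both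
  economies and has column sums \<open>1 - e i l < 1\<close>, and \<open>f\<close> only involves agent \<open>i\<close>'s two
  exponent vectors.\<close>

lemma misreport_price_bound:
  assumes i: "i < n" and ve: "valid_endowments n m e" and ei: "\<forall>l<m. e i l > 0"
    and va: "\<forall>k<n. valid_exponents m (alpha k)" and vai: "valid_exponents m (alpha' i)"
    and same: "\<forall>k<n. k \<noteq> i \<longrightarrow> alpha' k = alpha k"
    and peq: "\<forall>t<m. p t = (\<Sum>k<n. alpha k t * price_dot m p (e k))"
    and peq': "\<forall>t<m. p' t = (\<Sum>k<n. alpha' k t * price_dot m p' (e k))"
    and w: "0 \<le> price_dot m p (e i)" and w': "0 \<le> price_dot m p' (e i)"
    and j: "j < m"
  shows "alpha' i j * price_dot m p' (e i) * p j \<le> price_dot m p (e i) * p' j"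
proof -
  define w where "w = price_dot m p (e i)"
  define w' where "w' = price_dot m p' (e i)"
  define c where "c = alpha' i j"
  define N where "N t l = (\<Sum>k\<in>{..<n}-{i}. alpha k t * e k l)" for t l
  define z where "z t = c * w' * p t - w * p' t" for t
  define f where "f t = w * w' * (c * alpha i t - alpha' i t)" for t
  have "z j \<le> 0"
  proof (rule substochastic_fixpoint_nonpos[OF j, of z N f])
    show "\<forall>t<m. z t = (\<Sum>l<m. N t l * z l) + f t"
    proof (intro allI impI)
      fix t assume t: "t < m"
      have N': "N t = (\<lambda>l. \<Sum>k\<in>{..<n}-{i}. alpha' k t * e k l)"
        using same by (auto simp: N_def intro!: sum.cong)
      have p't: "p' t = (\<Sum>l<m. N t l * p' l) + alpha' i t * w'"
        unfolding N' w'_def by (rule price_eq_split_agent[OF i t]) (use peq' t in simp)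
      have pt: "p t = (\<Sum>l<m. N t l * p l) + alpha i t * w"
        unfolding N_def w_def by (rule price_eq_split_agent[OF i t]) (use peq t in simp)
      have "(\<Sum>l<m. N t l * z l) = c * w' * (\<Sum>l<m. N t l * p l) - w * (\<Sum>l<m. N t l * p' l)"
        by (simp add: z_def sum_subtractf sum_distrib_left algebra_simps)
      then show "z t = (\<Sum>l<m. N t l * z l) + f t"
        by (simp add: z_def f_def pt p't algebra_simps)
    qed
    show "\<forall>t<m. \<forall>l<m. 0 \<le> N t l"
      using va ve unfolding N_def valid_exponents_def valid_endowments_def
      by (auto intro!: sum_nonneg)
    show "\<forall>l<m. (\<Sum>t<m. N t l) < 1"
      using others_endowment_column_sum[OF i ve va] ei unfolding N_def by simp
    show "\<forall>D \<subseteq> {..<m}. j \<in> D \<longrightarrow> sum f D \<le> 0"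
    proof (intro allI impI)
      fix D assume "D \<subseteq> {..<m}" "j \<in> D"
      then have "c * (\<Sum>t\<in>D. alpha i t) - (\<Sum>t\<in>D. alpha' i t) \<le> 0"
        using valid_exponents_mult_sum_le[of m "alpha i" "alpha' i"] va vai i unfolding c_def by simp
      moreover have "sum f D = w * w' * (c * (\<Sum>t\<in>D. alpha i t) - (\<Sum>t\<in>D. alpha' i t))"
        by (simp add: f_def sum_distrib_left sum_subtractf algebra_simps)
      ultimately show "sum f D \<le> 0"
        using w w' by (simp add: w_def w'_def mult_nonneg_nonpos)
    qed
  qed
  then show ?thesis
    by (simp add: z_def c_def w_def w'_def)
qed

lemma cobb_douglas_ratio_le_card:
  assumes dem: "in_demand m a w p y" and va: "valid_exponents m a" and m: "m \<ge> 1"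
    and z0: "\<forall>j<m. 0 \<le> z j" and z: "\<forall>t<m. p t * z t \<le> price_dot m p w"
  shows "cobb_douglas m a z / cobb_douglas m a y \<le> real m"
proof -
  have "price_dot m p (\<lambda>j. z j / real m) = (\<Sum>t<m. p t * z t) / real m"
    by (simp add: price_dot_def sum_divide_distrib)
  also have "\<dots> \<le> price_dot m p w"
    using sum_bounded_above[of "{..<m}" "\<lambda>t. p t * z t" "price_dot m p w"] z m
    by (simp add: divide_le_eq mult.commute)
  finally have "cobb_douglas m a (\<lambda>j. z j / real m) \<le> cobb_douglas m a y"
    using dem z0 unfolding in_demand_def by simp
  moreover have "cobb_douglas m a (\<lambda>j. z j / real m) = cobb_douglas m a z / real m"
    using cobb_douglas_scale[where c = "1 / real m" and m = m and a = a and y = z] m va unfolding valid_exponents_def by simp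
  ultimately have "cobb_douglas m a z \<le> real m * cobb_douglas m a y"
    using m by (simp add: divide_le_eq mult.commute)
  moreover have "0 \<le> cobb_douglas m a y"
    using dem unfolding in_demand_def by (auto intro: cobb_douglas_nonneg)
  ultimately show ?thesis
    by (cases "cobb_douglas m a y = 0") (auto simp: divide_le_eq mult.commute)
qed

theorem theorem1:
  fixes n m i :: nat
    and alpha alpha' e x x' :: "nat \<Rightarrow> nat \<Rightarrow> real"
    and p p' :: "nat \<Rightarrow> real"
  assumes "n \<ge> 1" and "m \<ge> 1" and "i < n"
    and "valid_endowments n m e"
    and "\<forall>k<n. \<forall>j<m. e k j > 0"
    and "\<forall>k<n. valid_exponents m (alpha k)"
    and "valid_exponents m (alpha' i)"
    and "\<forall>k<n. k \<noteq> i \<longrightarrow> alpha' k = alpha k"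
    and "strongly_competitive n m alpha"
    and "strongly_competitive n m alpha'"
    and "competitive_equilibrium n m alpha e p x"
    and "competitive_equilibrium n m alpha' e p' x'"
  shows "cobb_douglas m (alpha i) (x' i) / cobb_douglas m (alpha i) (x i) \<le> real m"
proof -
  note m = assms(2) and i = assms(3) and ve = assms(4) and epos = assms(5)
    and va = assms(6) and vai = assms(7) and same = assms(8)
    and ce = assms(11) and ce' = assms(12)
  have va': "\<forall>k<n. valid_exponents m (alpha' k)"
    using va vai same by metis
  have ppos: "\<forall>t<m. p t > 0" and ppos': "\<forall>t<m. p' t > 0"
    using equilibrium_price_pos[OF ce assms(9) epos] equilibrium_price_pos[OF ce' assms(10) epos] by blast+
  have dem: "\<forall>k<n. in_demand m (alpha k) (e k) p (x k)"
    and dem': "\<forall>k<n. in_demand m (alpha' k) (e k) p' (x' k)"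
    using ce ce' unfolding competitive_equilibrium_def by auto
  have share: "\<forall>k<n. \<forall>t<m. p t * x k t = alpha k t * price_dot m p (e k)"
    and share': "\<forall>k<n. \<forall>t<m. p' t * x' k t = alpha' k t * price_dot m p' (e k)"
    using in_demand_expenditure_share dem dem' va va' ppos ppos' epos by blast+
  have peq: "\<forall>t<m. p t = (\<Sum>k<n. alpha k t * price_dot m p (e k))"
    and peq': "\<forall>t<m. p' t = (\<Sum>k<n. alpha' k t * price_dot m p' (e k))"
    using equilibrium_price_eq[OF ce ve share] equilibrium_price_eq[OF ce' ve share'] by blast+
  have income: "0 \<le> price_dot m q (e i)" if "\<forall>t<m. q t > 0" for q
    using that epos i unfolding price_dot_def by (intro sum_nonneg) (simp add: less_imp_le)
  have "p t * x' i t \<le> price_dot m p (e i)" if t: "t < m" for t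
  proof -
    have "p' t * (p t * x' i t) = alpha' i t * price_dot m p' (e i) * p t"
      using share' i t by (simp add: algebra_simps)
    also have "\<dots> \<le> price_dot m p (e i) * p' t"
      using misreport_price_bound[OF i ve _ va vai same peq peq' income[OF ppos] income[OF ppos'] t]
        epos i by simp
    finally show ?thesis
      using ppos' t by (simp add: mult.commute)
  qed
  moreover have "\<forall>j<m. 0 \<le> x' i j"
    using dem' i unfolding in_demand_def by simp
  ultimately show ?thesis
    using cobb_douglas_ratio_le_card dem i va m by blast
qed

end
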